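(* Let $\kappa>-1$ and $\Gamma$ a constant real $n\times r$ matrix. For a curve $(X(t),P(t))$ in $T^*V(n,r)$ set $\Phi=PX^T-XP^T\in so(n)$ and $\Psi=X^TP-P^TX\in so(r)$. Then the system $$\dot X=P-(1+2\kappa)XP^TX,\qquad \dot P=(1+2\kappa)PX^TP-\Gamma+X\Lambda,\qquad \Lambda=\tfrac12\left(-2P^TP+X^T\Gamma+\Gamma^TX\right)$$ is equivalent to the system $$\dot X=\Phi X+\kappa X\Psi,\qquad \dot\Phi=X\Gamma^T-\Gamma X^T,\qquad \dot\Psi=\Gamma^TX-X^T\Gamma.$$
   Context: $V(n,r)=\{X\in M_{n,r}(\mathbb R):X^TX=\mathbf I_r\}$, and $T^*V(n,r)$ is realized as the set of pairs $(X,P)$ of real $n\times r$ matrices with $X^TX=\mathbf I_r$, $X^TP+P^TX=0$. The first system is the Hamiltonian flow of $H=\frac12\operatorname{tr}(P^TP)-\frac{1+2\kappa}{2}\operatorname{tr}((XP^T)^2)+\operatorname{tr}(X^T\Gamma)$ on $T^*V(n,r)$; $\Phi$ and $\Psi$ are the momentum mappings of the left $SO(n)$- and right $SO(r)$-actions. *)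

theory Defs
  imports "HOL-Analysis.Analysis"
begin

(* Real n x r matrices are rendered as real^r^n (rows indexed by n). *)

definition in_cotangent_stiefel :: "real^'r^'n \<Rightarrow> real^'r^'n \<Rightarrow> bool" where
  "in_cotangent_stiefel X P \<longleftrightarrow>
     transpose X ** X = mat 1 \<and> transpose X ** P + transpose P ** X = 0"

definition Phi_map :: "real^'r^'n \<Rightarrow> real^'r^'n \<Rightarrow> real^'n^'n" where
  "Phi_map X P = P ** transpose X - X ** transpose P"

definition Psi_map :: "real^'r^'n \<Rightarrow> real^'r^'n \<Rightarrow> real^'r^'r" where
  "Psi_map X P = transpose X ** P - transpose P ** X"

end

theory Submission
  imports Defs
begin

text \<open>On \<open>T\<^sup>*V(n,r)\<close>, i.e. using \<open>X\<^sup>TX = I\<close> and \<open>X\<^sup>TP = -P\<^sup>TX\<close>, the two right-hand sides for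
  \<open>\<dot>X\<close> agree identically, and differentiating \<open>\<Phi>\<close> and \<open>\<Psi>\<close> along the first system gives the
  second one. Conversely, the velocity \<open>\<dot>P\<close> is determined by \<open>\<dot>\<Phi>\<close>, \<open>\<dot>\<Psi>\<close> and the derivative of
  the constraint \<open>X\<^sup>TP + P\<^sup>TX = 0\<close>: if \<open>D\<close> is the difference of two candidates, then \<open>X\<^sup>TD\<close> is
  both symmetric and skew, hence zero, and \<open>D = DX\<^sup>TX = XD\<^sup>TX = 0\<close>.\<close>

lemma matrix_add_rdistrib: "((A::'a::semiring_1^'n^'m) + B) ** C = A ** C + B ** C"
  by (vector matrix_matrix_mult_def sum.distrib[symmetric] field_simps)

lemma matrix_diff_ldistrib: "(A::'a::ring_1^'n^'m) ** (B - C) = A ** B - A ** C"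
  by (vector matrix_matrix_mult_def sum_subtractf[symmetric] field_simps)

lemma matrix_diff_rdistrib: "((A::'a::ring_1^'n^'m) - B) ** C = A ** C - B ** C"
  by (vector matrix_matrix_mult_def sum_subtractf[symmetric] field_simps)

lemma matrix_mul_uminus_left: "(- (A::'a::ring_1^'n^'m)) ** C = - (A ** C)"
  by (vector matrix_matrix_mult_def sum_negf[symmetric])

lemma matrix_mul_uminus_right: "(A::'a::ring_1^'n^'m) ** (- C) = - (A ** C)"
  by (vector matrix_matrix_mult_def sum_negf[symmetric])

lemma transpose_add: "transpose (A + B) = transpose A + transpose (B::'a::semiring_1^'n^'m)"
  by (vector transpose_def)

lemma transpose_diff: "transpose (A - B) = transpose A - transpose (B::'a::ring_1^'n^'m)"
  by (vector transpose_def)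

lemma transpose_uminus: "transpose (- A) = - transpose (A::'a::ring_1^'n^'m)"
  by (vector transpose_def)

lemma numeral_mult_eq_scaleR: "(numeral w :: 'a::real_algebra_1) * x = numeral w *\<^sub>R x"
  by (simp add: scaleR_conv_of_real)

lemmas matrix_ring_simps = numeral_mult_eq_scaleR
  matrix_add_ldistrib matrix_add_rdistrib matrix_diff_ldistrib matrix_diff_rdistrib
  matrix_mul_uminus_left matrix_mul_uminus_right matrix_mul_assoc
  scalar_matrix_assoc[symmetric] matrix_scalar_ac
  transpose_add transpose_diff transpose_uminus transpose_scalar matrix_transpose_mul
  scaleR_right_diff_distrib scaleR_right_distrib

lemma bounded_bilinear_matrix_matrix_mult:
  "bounded_bilinear ((**) :: real^'n^'m \<Rightarrow> real^'p^'n \<Rightarrow> real^'p^'m)"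
  unfolding bilinear_conv_bounded_bilinear[symmetric] bilinear_def
  by (auto intro!: linearI simp: matrix_add_ldistrib matrix_add_rdistrib
      matrix_scalar_ac scalar_matrix_assoc)

lemma bounded_linear_transpose: "bounded_linear (transpose :: real^'n^'m \<Rightarrow> real^'m^'n)"
  unfolding linear_conv_bounded_linear[symmetric]
  by (auto intro!: linearI simp: transpose_add transpose_scalar)

lemma has_vector_derivative_matrix_mult:
  fixes f :: "real \<Rightarrow> real^'n^'m" and g :: "real \<Rightarrow> real^'p^'n"
  assumes "(f has_vector_derivative f') (at t)" and "(g has_vector_derivative g') (at t)"
  shows "((\<lambda>s. f s ** g s) has_vector_derivative (f t ** g' + f' ** g t)) (at t)"
  using bounded_bilinear.has_vector_derivative[OF bounded_bilinear_matrix_matrix_mult assms] .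

lemma has_vector_derivative_transpose:
  fixes f :: "real \<Rightarrow> real^'n^'m"
  assumes "(f has_vector_derivative f') (at t)"
  shows "((\<lambda>s. transpose (f s)) has_vector_derivative transpose f') (at t)"
  using bounded_linear.has_vector_derivative[OF bounded_linear_transpose assms] .

lemma has_vector_derivative_at_iff_eq:
  "(f has_vector_derivative D) (at t) \<Longrightarrow> (f has_vector_derivative V) (at t) \<longleftrightarrow> D = V"
  by (metis has_vector_derivative_eq_rhs vector_derivative_unique_at)

lemma Phi_map_diff_right: "Phi_map X (B - B') = Phi_map X B - Phi_map X B'"
  unfolding Phi_map_def by (simp add: matrix_ring_simps)

lemma Psi_map_diff_right: "Psi_map X (B - B') = Psi_map X B - Psi_map X B'"
  unfolding Psi_map_def by (simp add: matrix_ring_simps)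

lemma has_vector_derivative_Phi_map:
  assumes "(X has_vector_derivative A) (at t)" and "(P has_vector_derivative B) (at t)"
  shows "((\<lambda>s. Phi_map (X s) (P s)) has_vector_derivative
           (Phi_map (X t) B + Phi_map A (P t))) (at t)"
  unfolding Phi_map_def
  by (rule has_vector_derivative_eq_rhs[OF has_vector_derivative_diff[OF
        has_vector_derivative_matrix_mult[OF assms(2) has_vector_derivative_transpose[OF assms(1)]]
        has_vector_derivative_matrix_mult[OF assms(1) has_vector_derivative_transpose[OF assms(2)]]]])
     (simp add: algebra_simps)

lemma has_vector_derivative_Psi_map:
  assumes "(X has_vector_derivative A) (at t)" and "(P has_vector_derivative B) (at t)"
  shows "((\<lambda>s. Psi_map (X s) (P s)) has_vector_derivative
           (Psi_map (X t) B + Psi_map A (P t))) (at t)"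
  unfolding Psi_map_def
  by (rule has_vector_derivative_eq_rhs[OF has_vector_derivative_diff[OF
        has_vector_derivative_matrix_mult[OF has_vector_derivative_transpose[OF assms(1)] assms(2)]
        has_vector_derivative_matrix_mult[OF has_vector_derivative_transpose[OF assms(2)] assms(1)]]])
     (simp add: algebra_simps)

lemma has_vector_derivative_cotangent_constraint:
  assumes "open I" and "t \<in> I"
    and "\<And>s. s \<in> I \<Longrightarrow> in_cotangent_stiefel (X s) (P s)"
    and dX: "(X has_vector_derivative A) (at t)" and dP: "(P has_vector_derivative B) (at t)"
  shows "transpose A ** P t + transpose (X t) ** B + (transpose B ** X t + transpose (P t) ** A) = 0"
proof -
  let ?C = "\<lambda>s. transpose (X s) ** P s + transpose (P s) ** X s"
  have "(?C has_vector_derivative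
      (transpose (X t) ** B + transpose A ** P t + (transpose (P t) ** A + transpose B ** X t))) (at t)"
    by (intro has_vector_derivative_add has_vector_derivative_matrix_mult
        has_vector_derivative_transpose dX dP)
  moreover have "(?C has_vector_derivative 0) (at t)"
    by (rule has_vector_derivative_transform_within_open[OF has_vector_derivative_const \<open>open I\<close> \<open>t \<in> I\<close>])
       (use assms(3) in \<open>auto simp: in_cotangent_stiefel_def\<close>)
  ultimately show ?thesis
    using vector_derivative_unique_at by (fastforce simp: algebra_simps)
qed

lemma eq_zero_if_Phi_Psi_constraint_zero:
  fixes X D :: "real^'r^'n"
  assumes "transpose X ** X = mat 1"
    and Phi: "Phi_map X D = 0" and Psi: "Psi_map X D = 0"
    and constraint: "transpose X ** D + transpose D ** X = 0"
  shows "D = 0"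
proof -
  have "transpose X ** D = transpose D ** X"
    using Psi by (simp add: Psi_map_def)
  with constraint have "transpose D ** X = 0"
    by (metis scaleR_2 scaleR_eq_0_iff zero_neq_numeral)
  have "D = D ** transpose X ** X"
    by (metis assms(1) matrix_mul_assoc matrix_mul_rid)
  also have "\<dots> = X ** (transpose D ** X)"
    using Phi by (simp add: Phi_map_def matrix_mul_assoc)
  finally show "D = 0"
    using \<open>transpose D ** X = 0\<close> by simp
qed

context
  fixes X P :: "real^'r^'n"
  assumes orthonormal: "transpose X ** X = mat 1"
    and cotangent: "transpose X ** P + transpose P ** X = 0"
begin

lemma matrix_mul_transpose_orthonormal: "(Y::real^'r^'q) ** transpose X ** X = Y"
  by (metis orthonormal matrix_mul_assoc matrix_mul_rid)

lemma transpose_mul_momentum: "transpose X ** P = - (transpose P ** X)"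
  using cotangent by (simp add: eq_neg_iff_add_eq_0)

lemma matrix_mul_transpose_mul_momentum: "(Y::real^'r^'q) ** transpose X ** P = - (Y ** transpose P ** X)"
  by (metis transpose_mul_momentum matrix_mul_assoc matrix_mul_uminus_right)

lemmas cotangent_simps = orthonormal transpose_mul_momentum
  matrix_mul_transpose_orthonormal matrix_mul_transpose_mul_momentum

lemma first_velocity_eq_Phi_Psi:
  "P - (1 + 2 * k) *\<^sub>R (X ** transpose P ** X) = Phi_map X P ** X + k *\<^sub>R (X ** Psi_map X P)"
  unfolding Phi_map_def Psi_map_def
  by (simp add: matrix_ring_simps cotangent_simps algebra_simps)

lemma first_system_momentum_derivatives:
  fixes G :: "real^'r^'n" and k :: real
  defines "A \<equiv> P - (1 + 2 * k) *\<^sub>R (X ** transpose P ** X)"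
    and "B \<equiv> (1 + 2 * k) *\<^sub>R (P ** transpose X ** P) - G
            + X ** ((1/2) *\<^sub>R (- 2 *\<^sub>R (transpose P ** P) + transpose X ** G + transpose G ** X))"
  shows "Phi_map X B + Phi_map A P = X ** transpose G - G ** transpose X"
    and "Psi_map X B + Psi_map A P = transpose G ** X - transpose X ** G"
    and "transpose A ** P + transpose X ** B + (transpose B ** X + transpose P ** A) = 0"
  unfolding A_def B_def Phi_map_def Psi_map_def
  by (simp_all add: matrix_ring_simps cotangent_simps algebra_simps)

lemma first_system_iff_momentum_system:
  fixes A B G :: "real^'r^'n" and k :: real
  assumes tangent: "transpose A ** P + transpose X ** B + (transpose B ** X + transpose P ** A) = 0"
  shows "(A = P - (1 + 2 * k) *\<^sub>R (X ** transpose P ** X) \<and>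
          B = (1 + 2 * k) *\<^sub>R (P ** transpose X ** P) - G
            + X ** ((1/2) *\<^sub>R (- 2 *\<^sub>R (transpose P ** P) + transpose X ** G + transpose G ** X)))
     \<longleftrightarrow> (A = Phi_map X P ** X + k *\<^sub>R (X ** Psi_map X P) \<and>
          Phi_map X B + Phi_map A P = X ** transpose G - G ** transpose X \<and>
          Psi_map X B + Psi_map A P = transpose G ** X - transpose X ** G)"
    (is "(A = ?A0 \<and> B = ?B0) \<longleftrightarrow> ?momentum_system")
proof
  assume "A = ?A0 \<and> B = ?B0"
  then show ?momentum_system
    using first_velocity_eq_Phi_Psi first_system_momentum_derivatives by simp
next
  assume momentum: ?momentum_system
  then have "A = ?A0"
    using first_velocity_eq_Phi_Psi by simp
  define B0 where "B0 = ?B0"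
  note B0_derivatives = first_system_momentum_derivatives[of k G, folded \<open>A = ?A0\<close> B0_def]
  have "Phi_map X (B - B0) = 0"
    using momentum B0_derivatives(1) by (metis add_right_cancel diff_self Phi_map_diff_right)
  moreover have "Psi_map X (B - B0) = 0"
    using momentum B0_derivatives(2) by (metis add_right_cancel diff_self Psi_map_diff_right)
  moreover have "transpose X ** (B - B0) + transpose (B - B0) ** X = 0"
  proof -
    have "transpose X ** (B - B0) + transpose (B - B0) ** X
        = (transpose A ** P + transpose X ** B + (transpose B ** X + transpose P ** A))
          - (transpose A ** P + transpose X ** B0 + (transpose B0 ** X + transpose P ** A))"
      by (simp add: matrix_diff_ldistrib matrix_diff_rdistrib transpose_diff algebra_simps)
    then show ?thesis
      using tangent B0_derivatives(3) by simp
  qed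
  ultimately have "B - B0 = 0"
    by (rule eq_zero_if_Phi_Psi_constraint_zero[OF orthonormal])
  with \<open>A = ?A0\<close> show "A = ?A0 \<and> B = ?B0"
    by (simp add: B0_def)
qed

end

theorem lemma3:
  fixes \<kappa> :: real and \<Gamma> :: "real^'r^'n" and I :: "real set"
    and X P :: "real \<Rightarrow> real^'r^'n"
  assumes kappa: "\<kappa> > -1"
    and I_open: "open I"
    and curve: "\<And>t. t \<in> I \<Longrightarrow> in_cotangent_stiefel (X t) (P t)"
    and X_diff: "\<And>t. t \<in> I \<Longrightarrow> X differentiable (at t)"
    and P_diff: "\<And>t. t \<in> I \<Longrightarrow> P differentiable (at t)"
  shows "(\<forall>t\<in>I.
            (X has_vector_derivative
               (P t - (1 + 2 * \<kappa>) *\<^sub>R (X t ** transpose (P t) ** X t))) (at t) \<and>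
            (P has_vector_derivative
               ((1 + 2 * \<kappa>) *\<^sub>R (P t ** transpose (X t) ** P t) - \<Gamma>
                + X t ** ((1/2) *\<^sub>R (- 2 *\<^sub>R (transpose (P t) ** P t)
                     + transpose (X t) ** \<Gamma> + transpose \<Gamma> ** X t)))) (at t))
      \<longleftrightarrow>
         (\<forall>t\<in>I.
            (X has_vector_derivative
               (Phi_map (X t) (P t) ** X t + \<kappa> *\<^sub>R (X t ** Psi_map (X t) (P t)))) (at t) \<and>
            ((\<lambda>s. Phi_map (X s) (P s)) has_vector_derivative
               (X t ** transpose \<Gamma> - \<Gamma> ** transpose (X t))) (at t) \<and>
            ((\<lambda>s. Psi_map (X s) (P s)) has_vector_derivative
               (transpose \<Gamma> ** X t - transpose (X t) ** \<Gamma>)) (at t))"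
proof (rule ball_cong[OF refl], goal_cases)
  case (1 t)
  obtain A B where dX: "(X has_vector_derivative A) (at t)" and dP: "(P has_vector_derivative B) (at t)"
    using X_diff[OF 1] P_diff[OF 1] vector_derivative_works by blast
  have "transpose (X t) ** X t = mat 1" and "transpose (X t) ** P t + transpose (P t) ** X t = 0"
    using curve[OF 1] unfolding in_cotangent_stiefel_def by auto
  from first_system_iff_momentum_system[OF this
      has_vector_derivative_cotangent_constraint[OF I_open 1 curve dX dP], of \<kappa> \<Gamma>]
  show ?case
    unfolding has_vector_derivative_at_iff_eq[OF dX] has_vector_derivative_at_iff_eq[OF dP]
      has_vector_derivative_at_iff_eq[OF has_vector_derivative_Phi_map[OF dX dP]]
      has_vector_derivative_at_iff_eq[OF has_vector_derivative_Psi_map[OF dX dP]] .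
qed

end
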